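(* Let $(X,E,\ell)$ be a uniformly connected and fully deterministic edge-labelled directed graph with label alphabet $\Sigma$. Then for all $x,y\in X$ the language $L_{x,y}$ is growth sensitive.
   Context: $\Sigma$ is a finite alphabet, $\Sigma^*$ the set of finite words (including the empty word $\epsilon$), $\Sigma^+=\Sigma^*\setminus\{\epsilon\}$. A factor of $a_1\cdots a_n$ is a word $a_i\cdots a_j$, $1\le i\le j\le n$. For $L\subset\Sigma^*$, $\mathsf h(L)=\limsup_{n\to\infty}\frac1n\log|\{w\in L:|w|=n\}|$ and, for finite $F\subset\Sigma^+$, $L^F=\{w\in L:\text{no }v\in F\text{ is a factor of }w\}$. $L$ is growth sensitive if $\mathsf h(L^F)<\mathsf h(L)$ for every finite non-empty set $F\subset\Sigma^+$ consisting of factors of elements of $L$. $(X,E,\ell)$ is a directed graph whose edges $(x,a,y)$ carry labels $a\in\Sigma$ (two edges with the same endpoints have distinct labels); $L_{x,y}$ is the set of labels (concatenated edge labels) of all paths from $x$ to $y$, including $\epsilon$ for the empty path when $x=y$. The graph is fully deterministic if for every vertex $x$ and every $a\in\Sigma$ there is exactly one edge with initial vertex $x$ and label $a$. It is uniformly connected if there is a path between any ordered pair of vertices and there is $K$ such that for every edge from $x$ to $y$ there is a path from $y$ to $x$ of length at most $K$. *)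

theory Defs
  imports Complex_Main "HOL-Library.Extended_Real" "HOL-Library.Liminf_Limsup"
begin

definition factor :: "'a list \<Rightarrow> 'a list \<Rightarrow> bool" where
  "factor v w \<longleftrightarrow> v \<noteq> [] \<and> (\<exists>u z. w = u @ v @ z)"

definition nwords :: "'a list set \<Rightarrow> nat \<Rightarrow> nat" where
  "nwords L n = card {w \<in> L. length w = n}"

definition growth :: "'a list set \<Rightarrow> ereal" where
  "growth L = limsup (\<lambda>n. if nwords L n = 0 then (-\<infinity>)
                            else ereal (ln (real (nwords L n)) / real n))"

definition avoiding :: "'a list set \<Rightarrow> 'a list set \<Rightarrow> 'a list set" where
  "avoiding L F = {w \<in> L. \<forall>v\<in>F. \<not> factor v w}"

definition growth_sensitive :: "'a list set \<Rightarrow> bool" where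
  "growth_sensitive L \<longleftrightarrow>
     (\<forall>F. finite F \<and> F \<noteq> {} \<and> (\<forall>v\<in>F. \<exists>w\<in>L. factor v w)
          \<longrightarrow> growth (avoiding L F) < growth L)"

inductive path :: "'v set \<Rightarrow> ('v \<times> 'a \<times> 'v) set \<Rightarrow> 'v \<Rightarrow> 'a list \<Rightarrow> 'v \<Rightarrow> bool"
  for X E where
  path_nil: "x \<in> X \<Longrightarrow> path X E x [] x"
| path_cons: "(x, a, z) \<in> E \<Longrightarrow> path X E z w y \<Longrightarrow> path X E x (a # w) y"

definition lang :: "'v set \<Rightarrow> ('v \<times> 'a \<times> 'v) set \<Rightarrow> 'v \<Rightarrow> 'v \<Rightarrow> 'a list set" where
  "lang X E x y = {w. path X E x w y}"

definition labelled_graph :: "'v set \<Rightarrow> ('v \<times> 'a \<times> 'v) set \<Rightarrow> 'a set \<Rightarrow> bool" where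
  "labelled_graph X E \<Sigma> \<longleftrightarrow> finite \<Sigma> \<and> E \<subseteq> X \<times> \<Sigma> \<times> X"

definition fully_deterministic :: "'v set \<Rightarrow> ('v \<times> 'a \<times> 'v) set \<Rightarrow> 'a set \<Rightarrow> bool" where
  "fully_deterministic X E \<Sigma> \<longleftrightarrow> (\<forall>x\<in>X. \<forall>a\<in>\<Sigma>. \<exists>!y. (x, a, y) \<in> E)"

definition uniformly_connected :: "'v set \<Rightarrow> ('v \<times> 'a \<times> 'v) set \<Rightarrow> bool" where
  "uniformly_connected X E \<longleftrightarrow>
     (\<forall>x\<in>X. \<forall>y\<in>X. \<exists>w. path X E x w y) \<and>
     (\<exists>K::nat. \<forall>x a y. (x, a, y) \<in> E \<longrightarrow> (\<exists>w. path X E y w x \<and> length w \<le> K))"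

end

theory Submission
  imports Defs "HOL-Real_Asymp.Real_Asymp"
begin

(*
  Fix a forbidden factor v of a word of L = L_{x,y}, and a word u \<in> L of length n avoiding v.
  Cut off the first Q = n div (g |v|) blocks of length g |v| of u and insert into each block,
  at one of the g offsets divisible by |v|, a loop that starts with v and returns to the
  vertex reached there.  Determinism makes that vertex well defined, uniform connectivity
  bounds the loop length by (K + 1) |v|, and since u avoids v the inserted copy of v is the
  first occurrence of v at an offset divisible by |v|, so u and the offsets can be recovered.
  Hence |L^F_n| g^Q \<le> \<Sum> |L_l| over l \<in> [n + Q |v|, n + Q (K + 1) |v|], and choosing
  g \<ge> exp ((K + 1) |v| (h(L) + 1) + 2) this is incompatible with h(L^F) = h(L).
*)

lemma factor_append_left: "factor v u \<Longrightarrow> factor v (u @ w)"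
  unfolding factor_def by (metis append_assoc)

lemma factor_append_right: "factor v w \<Longrightarrow> factor v (u @ w)"
  unfolding factor_def by (metis append_assoc)

lemma factor_take: "factor v (take n u) \<Longrightarrow> factor v u"
  by (metis append_take_drop_id factor_append_left)

lemma factor_drop: "factor v (drop n u) \<Longrightarrow> factor v u"
  by (metis append_take_drop_id factor_append_right)

lemma factor_free_prefix_eq:
  assumes "s @ v @ t = s' @ v @ t'" "v \<noteq> []" "\<not> factor v s" "\<not> factor v s'"
    and "length s mod length v = length s' mod length v"
  shows "s = s'"
proof -
  have "s = s'"
    if eq: "s @ v @ t = s' @ v @ t'" and free: "\<not> factor v s'"
      and congr: "length s mod length v = length s' mod length v" and le: "length s \<le> length s'"
    for s s' t t'
  proof (rule ccontr)
    assume "s \<noteq> s'"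
    then have "length s \<noteq> length s'" using eq by (metis append_eq_append_conv)
    then have "length v dvd length s' - length s" "0 < length s' - length s"
      using congr le mod_eq_dvd_iff_nat[OF le, of "length v"] by simp_all
    then have "length s + length v \<le> length s'" by (auto dest: dvd_imp_le)
    then have "take (length s + length v) s' = s @ v"
      using arg_cong[OF eq, of "take (length s + length v)"] by simp
    then have "s' = s @ v @ drop (length s + length v) s'"
      by (metis append_assoc append_take_drop_id)
    then show False using free \<open>v \<noteq> []\<close> unfolding factor_def by blast
  qed
  then show ?thesis using assms by (metis nat_le_linear)
qed

definition log_ratio :: "(nat \<Rightarrow> nat) \<Rightarrow> nat \<Rightarrow> ereal" where
  "log_ratio f n = (if f n = 0 then -\<infinity> else ereal (ln (real (f n)) / real n))"

definition growth_rate :: "(nat \<Rightarrow> nat) \<Rightarrow> ereal" where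
  "growth_rate f = limsup (log_ratio f)"

lemma growth_eq_growth_rate: "growth L = growth_rate (nwords L)"
  unfolding growth_def growth_rate_def log_ratio_def ..

lemma growth_rate_le_ln:
  assumes "\<And>n. f n \<le> d ^ n"
  shows "growth_rate f \<le> ln (real d)"
  unfolding growth_rate_def
proof (rule Limsup_bounded, rule always_eventually, intro allI)
  fix n
  show "log_ratio f n \<le> ln (real d)"
  proof (cases "f n = 0 \<or> n = 0")
    case True
    then show ?thesis using assms[of 0] by (cases "d = 0") (auto simp: log_ratio_def)
  next
    case False
    have "d \<noteq> 0"
    proof
      assume "d = 0"
      then have "f n \<le> 0" using assms[of n] False by (auto simp: zero_power)
      with False show False by simp
    qed
    have "ln (real (f n)) \<le> ln (real (d ^ n))"
      using False assms[of n] \<open>d \<noteq> 0\<close> by (subst ln_le_cancel_iff) (auto simp del: of_nat_power)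
    also have "\<dots> = real n * ln (real d)" using \<open>d \<noteq> 0\<close> by (simp add: ln_realpow)
    finally show ?thesis using False by (simp add: log_ratio_def field_simps)
  qed
qed

lemma growth_rate_nonneg:
  assumes "frequently (\<lambda>n. 0 < f n) sequentially"
  shows "0 \<le> growth_rate f"
proof (rule ccontr)
  assume "\<not> 0 \<le> growth_rate f"
  have "frequently (\<lambda>n. 0 \<le> log_ratio f n) sequentially"
    using assms by (rule frequently_elim1) (simp add: log_ratio_def)
  moreover from \<open>\<not> 0 \<le> growth_rate f\<close> have "eventually (\<lambda>n. log_ratio f n < 0) sequentially"
    unfolding growth_rate_def by (intro Limsup_lessD) simp
  ultimately obtain n where "0 \<le> log_ratio f n" "log_ratio f n < 0"
    using frequently_ex[OF frequently_eventually_frequently] by blast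
  then show False by simp
qed

lemma eventually_le_exp_of_growth_rate_less:
  assumes "growth_rate f < ereal r"
  shows "eventually (\<lambda>n. real (f n) \<le> exp (r * real n)) sequentially"
proof -
  have "eventually (\<lambda>n. log_ratio f n < ereal r) sequentially"
    using assms unfolding growth_rate_def by (rule Limsup_lessD)
  then show ?thesis using eventually_gt_at_top[of "0::nat"]
  proof eventually_elim
    case (elim n)
    show ?case
    proof (cases "f n = 0")
      case False
      then have "ln (real (f n)) < r * real n" using elim by (simp add: log_ratio_def field_simps)
      then have "exp (ln (real (f n))) < exp (r * real n)" by simp
      then show ?thesis using False by simp
    qed simp
  qed
qed

lemma frequently_exp_le_of_less_growth_rate:
  assumes "ereal r < growth_rate f"
  shows "frequently (\<lambda>n. exp (r * real n) \<le> real (f n)) sequentially"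
proof (rule ccontr)
  assume "\<not> ?thesis"
  then have "eventually (\<lambda>n. real (f n) < exp (r * real n)) sequentially"
    by (simp add: not_frequently not_le)
  then have "eventually (\<lambda>n. log_ratio f n \<le> ereal r) sequentially"
    using eventually_gt_at_top[of "0::nat"]
  proof eventually_elim
    case (elim n)
    show ?case
    proof (cases "f n = 0")
      case False
      then have "ln (real (f n)) < ln (exp (r * real n))"
        using elim by (subst ln_less_cancel_iff) auto
      then show ?thesis using False elim by (simp add: log_ratio_def field_simps)
    qed (simp add: log_ratio_def)
  qed
  then have "growth_rate f \<le> ereal r" unfolding growth_rate_def by (rule Limsup_bounded)
  with assms show False by simp
qed

lemma eventually_linear_less_exp:
  fixes c C :: real
  assumes "0 < c" "0 \<le> C"
  shows "eventually (\<lambda>n. real n * C + 1 < exp (real n / c - 2)) sequentially"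
  using assms by real_asymp

lemma sum_window_le:
  fixes a :: "nat \<Rightarrow> nat" and r :: real
  assumes "\<And>l. N \<le> l \<Longrightarrow> real (a l) \<le> exp (r * real l)" "0 \<le> r" "N \<le> n" "Q \<le> n"
  shows "(\<Sum>l\<in>{n + Q * m .. n + Q * C}. real (a l)) \<le> (real n * real C + 1) * exp (r * real (n + Q * C))"
proof -
  have "(\<Sum>l\<in>{n + Q * m .. n + Q * C}. real (a l))
      \<le> real (card {n + Q * m .. n + Q * C}) * exp (r * real (n + Q * C))"
  proof (rule sum_bounded_above)
    fix l assume l: "l \<in> {n + Q * m .. n + Q * C}"
    then have "real (a l) \<le> exp (r * real l)" using assms(1,3) by simp
    also have "\<dots> \<le> exp (r * real (n + Q * C))"
      using l assms(2) by (simp add: mult_left_mono del: of_nat_add)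
    finally show "real (a l) \<le> exp (r * real (n + Q * C))" .
  qed
  also have "\<dots> \<le> (real n * real C + 1) * exp (r * real (n + Q * C))"
  proof (rule mult_right_mono)
    have "card {n + Q * m .. n + Q * C} \<le> Q * C + 1" by simp
    also have "\<dots> \<le> n * C + 1" using mult_right_mono[OF assms(4), of C] by simp
    finally have "card {n + Q * m .. n + Q * C} \<le> n * C + 1" .
    then show "real (card {n + Q * m .. n + Q * C}) \<le> real n * real C + 1"
      by (metis of_nat_1 of_nat_add of_nat_le_iff of_nat_mult)
  qed simp
  finally show ?thesis .
qed

lemma exp_le_of_insertion_estimate:
  fixes lam L Q n k C :: real
  assumes est: "exp ((lam - 1 / (2 * k)) * n + Q * L)
      \<le> (n * C + 1) * exp ((lam + 1 / (2 * k)) * (n + Q * C))"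
    and "1 \<le> k" "0 \<le> C" "0 \<le> Q" "n / k - 1 \<le> Q" "(lam + 1) * C + 2 \<le> L"
  shows "exp (n / k - 2) \<le> n * C + 1"
proof -
  define \<epsilon> where "\<epsilon> = 1 / (2 * k)"
  have "\<epsilon> \<le> 1" "2 * \<epsilon> * n = n / k" unfolding \<epsilon>_def using assms(2) by auto
  have "2 \<le> L - (lam + \<epsilon>) * C" using assms(3,6) \<open>\<epsilon> \<le> 1\<close> mult_right_mono[OF \<open>\<epsilon> \<le> 1\<close> assms(3)]
    by (simp add: algebra_simps)
  then have "2 * Q \<le> Q * (L - (lam + \<epsilon>) * C)" using assms(4) by (simp add: mult_left_mono mult.commute)
  moreover have "(lam - \<epsilon>) * n + Q * L - (lam + \<epsilon>) * (n + Q * C)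
      = Q * (L - (lam + \<epsilon>) * C) - 2 * \<epsilon> * n"
    by (simp add: algebra_simps)
  ultimately have "n / k - 2 \<le> (lam - \<epsilon>) * n + Q * L - (lam + \<epsilon>) * (n + Q * C)"
    using assms(5) \<open>2 * \<epsilon> * n = n / k\<close> by linarith
  then have "exp (n / k - 2) \<le> exp ((lam - \<epsilon>) * n + Q * L) / exp ((lam + \<epsilon>) * (n + Q * C))"
    by (simp add: exp_diff[symmetric])
  also have "\<dots> \<le> n * C + 1" using est unfolding \<epsilon>_def by (simp add: divide_le_eq)
  finally show ?thesis .
qed

lemma real_nat_div_ge: "real n / real k - 1 \<le> real (n div k)"
  using real_of_int_floor_ge_diff_one[of "real n / real k"] floor_divide_of_nat_eq[where 'a=real, of n k]
  by (metis of_int_of_nat_eq)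

lemma ex_nat_ln_ge: "\<exists>g::nat. 0 < g \<and> c \<le> ln (real g)"
proof -
  have "exp c \<le> real (nat \<lceil>exp c\<rceil>)" by (rule real_nat_ceiling_ge)
  moreover have "0 < exp c" by simp
  ultimately show ?thesis by (intro exI[of _ "nat \<lceil>exp c\<rceil>"]) (auto simp: ln_ge_iff)
qed

lemma growth_rate_le_witnesses:
  assumes "growth_rate a = ereal lam" "ereal lam \<le> growth_rate b" "0 < \<epsilon>"
    and "eventually P sequentially"
  obtains N n where "\<And>l. N \<le> l \<Longrightarrow> real (a l) \<le> exp ((lam + \<epsilon>) * real l)"
    and "N \<le> n" "exp ((lam - \<epsilon>) * real n) \<le> real (b n)" "P n"
proof -
  have "eventually (\<lambda>l. real (a l) \<le> exp ((lam + \<epsilon>) * real l)) sequentially"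
    using assms(1,3) by (intro eventually_le_exp_of_growth_rate_less) simp
  then obtain N where N: "\<And>l. N \<le> l \<Longrightarrow> real (a l) \<le> exp ((lam + \<epsilon>) * real l)"
    unfolding eventually_sequentially by blast
  have "ereal (lam - \<epsilon>) < ereal lam" using assms(3) by simp
  also have "\<dots> \<le> growth_rate b" by (fact assms(2))
  finally have "frequently (\<lambda>n. exp ((lam - \<epsilon>) * real n) \<le> real (b n)) sequentially"
    by (rule frequently_exp_le_of_less_growth_rate)
  moreover have "eventually (\<lambda>n. N \<le> n \<and> P n) sequentially"
    using assms(4) by (intro eventually_conj eventually_ge_at_top)
  ultimately obtain n where "exp ((lam - \<epsilon>) * real n) \<le> real (b n)" "N \<le> n" "P n"
    using frequently_ex[OF frequently_eventually_frequently] by blast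
  with N that show thesis by blast
qed

lemma growth_rate_less_of_insertion_bound:
  fixes a b :: "nat \<Rightarrow> nat" and m C :: nat
  assumes "0 < m" and "growth_rate a \<noteq> \<infinity>" and "frequently (\<lambda>n. 0 < a n) sequentially"
    and insertion: "\<And>g n. b n * g ^ (n div (g * m))
      \<le> (\<Sum>l\<in>{n + n div (g * m) * m .. n + n div (g * m) * C}. a l)"
  shows "growth_rate b < growth_rate a"
proof (rule ccontr)
  assume "\<not> growth_rate b < growth_rate a"
  moreover obtain lam where lam: "growth_rate a = ereal lam" "0 \<le> lam"
    using growth_rate_nonneg[OF assms(3)] assms(2) by (cases "growth_rate a") auto
  ultimately have "ereal lam \<le> growth_rate b" by simp
  \<comment> \<open>Each insertion gains a factor g but lengthens the words by at most C, which the
    exponential bound on a turns into a loss of at most exp ((lam + 1) C); g must beat that.\<close>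
  obtain g :: nat where "0 < g" and ln_g: "(lam + 1) * C + 2 \<le> ln (real g)"
    using ex_nat_ln_ge by blast
  define k where "k = g * m"
  have "0 < k" unfolding k_def using \<open>0 < g\<close> assms(1) by simp
  then have "1 \<le> real k" by linarith
  define \<epsilon> where "\<epsilon> = 1 / (2 * real k)"
  have "0 < \<epsilon>" unfolding \<epsilon>_def using \<open>1 \<le> real k\<close> by simp
  obtain N n where N: "\<And>l. N \<le> l \<Longrightarrow> real (a l) \<le> exp ((lam + \<epsilon>) * real l)"
    and n: "N \<le> n" "exp ((lam - \<epsilon>) * real n) \<le> real (b n)"
      "real n * real C + 1 < exp (real n / real k - 2)"
    using growth_rate_le_witnesses[OF lam(1) \<open>ereal lam \<le> growth_rate b\<close> \<open>0 < \<epsilon>\<close>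
        eventually_linear_less_exp[of "real k" "real C"]] \<open>1 \<le> real k\<close> by auto
  define Q where "Q = n div k"
  have "exp ((lam - \<epsilon>) * real n + real Q * ln (real g)) \<le> real (b n) * real g ^ Q"
    using n(2) \<open>0 < g\<close> by (simp add: exp_add exp_of_nat_mult)
  also have "\<dots> \<le> (\<Sum>l\<in>{n + Q * m .. n + Q * C}. real (a l))"
    using insertion[of n g] unfolding Q_def k_def by (metis of_nat_le_iff of_nat_mult of_nat_power of_nat_sum)
  also have "\<dots> \<le> (real n * real C + 1) * exp ((lam + \<epsilon>) * real (n + Q * C))"
    using N n(1) lam(2) \<open>0 < \<epsilon>\<close> by (intro sum_window_le) (auto simp: Q_def)
  finally have "exp ((lam - 1 / (2 * real k)) * real n + real Q * ln (real g))
      \<le> (real n * real C + 1) * exp ((lam + 1 / (2 * real k)) * (real n + real Q * real C))"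
    by (simp add: \<epsilon>_def)
  then have "exp (real n / real k - 2) \<le> real n * real C + 1"
    by (rule exp_le_of_insertion_estimate)
      (use \<open>1 \<le> real k\<close> ln_g real_nat_div_ge[of n k] in \<open>auto simp: Q_def\<close>)
  with n(3) show False by simp
qed

lemma path_append:
  "path X E x u z \<Longrightarrow> path X E z w y \<Longrightarrow> path X E x (u @ w) y"
  by (induction rule: path.induct) (auto intro: path.intros)

lemma path_replicate:
  assumes "path X E y c y" "y \<in> X"
  shows "path X E y (concat (replicate j c)) y"
  by (induction j) (auto intro: path.intros assms path_append)

locale det_graph =
  fixes X :: "'v set" and E :: "('v \<times> 'a \<times> 'v) set" and \<Sigma> :: "'a set"
  assumes labelled: "labelled_graph X E \<Sigma>"
    and deterministic: "fully_deterministic X E \<Sigma>"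
begin

lemma edges_subset: "E \<subseteq> X \<times> \<Sigma> \<times> X"
  and finite_alphabet: "finite \<Sigma>"
  using labelled unfolding labelled_graph_def by auto

lemma path_in_graph:
  assumes "path X E x w y"
  shows "set w \<subseteq> \<Sigma> \<and> x \<in> X \<and> y \<in> X"
  using assms edges_subset by (induction rule: path.induct) auto

lemma path_append_iff:
  "path X E x (u @ w) y \<longleftrightarrow> (\<exists>z. path X E x u z \<and> path X E z w y)"
proof
  show "path X E x (u @ w) y \<Longrightarrow> \<exists>z. path X E x u z \<and> path X E z w y"
  proof (induction u arbitrary: x)
    case Nil
    then have "x \<in> X" using path_in_graph by simp
    with Nil show ?case by (auto intro: path.path_nil)
  next
    case (Cons a u)
    then obtain z where "(x, a, z) \<in> E" "path X E z (u @ w) y"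
      by (auto elim: path.cases)
    with Cons.IH show ?case by (blast intro: path_cons)
  qed
qed (auto intro: path_append)

lemma path_unique:
  "path X E x w y \<Longrightarrow> path X E x w y' \<Longrightarrow> y = y'"
proof (induction arbitrary: y' rule: path.induct)
  case (path_nil x)
  then show ?case by (auto elim: path.cases)
next
  case (path_cons x a z w y)
  from path_cons.prems obtain z' where z': "(x, a, z') \<in> E" "path X E z' w y'"
    by (auto elim: path.cases)
  have "x \<in> X" "a \<in> \<Sigma>" using path_cons.hyps(1) edges_subset by auto
  then have "\<exists>!z. (x, a, z) \<in> E" using deterministic unfolding fully_deterministic_def by blast
  then have "z = z'" using path_cons.hyps(1) z'(1) by blast
  with path_cons.IH \<open>path X E z' w y'\<close> show ?case by blast
qed

lemma path_exists:
  "x \<in> X \<Longrightarrow> set w \<subseteq> \<Sigma> \<Longrightarrow> \<exists>y. path X E x w y"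
proof (induction w arbitrary: x)
  case Nil
  then show ?case by (blast intro: path_nil)
next
  case (Cons a w)
  then have "x \<in> X" "a \<in> \<Sigma>" "set w \<subseteq> \<Sigma>" by auto
  then obtain z where "(x, a, z) \<in> E"
    using deterministic unfolding fully_deterministic_def by blast
  moreover have "z \<in> X" using calculation edges_subset by blast
  ultimately show ?case using Cons.IH \<open>set w \<subseteq> \<Sigma>\<close> by (blast intro: path.path_cons)
qed

definition target :: "'v \<Rightarrow> 'a list \<Rightarrow> 'v" where
  "target x w = (THE y. path X E x w y)"

lemma target_eq: "path X E x w y \<Longrightarrow> target x w = y"
  unfolding target_def using path_unique by blast

lemma path_target: "x \<in> X \<Longrightarrow> set w \<subseteq> \<Sigma> \<Longrightarrow> path X E x w (target x w)"
  using path_exists target_eq by blast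

lemma lang_alphabet: "w \<in> lang X E x y \<Longrightarrow> set w \<subseteq> \<Sigma>"
  unfolding lang_def using path_in_graph by blast

lemma finite_lang_level: "finite {w \<in> lang X E x y. length w = n}"
  by (rule finite_subset[OF _ finite_lists_length_eq[OF finite_alphabet, of n]])
    (use lang_alphabet in auto)

lemma nwords_lang_le: "nwords (lang X E x y) n \<le> card \<Sigma> ^ n"
  unfolding nwords_def card_lists_length_eq[OF finite_alphabet, symmetric]
  by (rule card_mono[OF finite_lists_length_eq[OF finite_alphabet]]) (use lang_alphabet in auto)

lemma growth_lang_le_ln: "growth (lang X E x y) \<le> ln (real (card \<Sigma>))"
  unfolding growth_eq_growth_rate by (rule growth_rate_le_ln[OF nwords_lang_le])

end

locale bounded_return_graph = det_graph X E \<Sigma>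
  for X :: "'v set" and E :: "('v \<times> 'a \<times> 'v) set" and \<Sigma> :: "'a set" +
  fixes K :: nat
  assumes bounded_return: "(x, a, y) \<in> E \<Longrightarrow> \<exists>w. path X E y w x \<and> length w \<le> K"
begin

lemma path_reverse: "path X E x w y \<Longrightarrow> \<exists>r. path X E y r x \<and> length r \<le> K * length w"
proof (induction rule: path.induct)
  case (path_nil x)
  then show ?case by (auto intro: path.path_nil)
next
  case (path_cons x a z w y)
  then obtain r where "path X E y r z" "length r \<le> K * length w" by blast
  moreover obtain r' where "path X E z r' x" "length r' \<le> K"
    using bounded_return path_cons.hyps(1) by blast
  ultimately show ?case by (intro exI[of _ "r @ r'"]) (auto intro: path_append)
qed

end

locale loop_insertion = bounded_return_graph X E \<Sigma> K
  for X :: "'v set" and E :: "('v \<times> 'a \<times> 'v) set" and \<Sigma> :: "'a set" and K :: nat +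
  fixes v :: "'a list"
  assumes v_nonempty: "v \<noteq> []" and v_alphabet: "set v \<subseteq> \<Sigma>"
begin

definition return_loop :: "'v \<Rightarrow> 'a list" where
  "return_loop z = v @ (SOME r. path X E (target z v) r z \<and> length r \<le> K * length v)"

lemma length_return_loop_ge: "length v \<le> length (return_loop z)"
  unfolding return_loop_def by simp

lemma return_loop_path_length:
  assumes "z \<in> X"
  shows "path X E z (return_loop z) z" "length (return_loop z) \<le> length v + K * length v"
proof -
  have p: "path X E z v (target z v)" using path_target[OF assms v_alphabet] .
  define r where "r = (SOME r. path X E (target z v) r z \<and> length r \<le> K * length v)"
  have "path X E (target z v) r z \<and> length r \<le> K * length v"
    unfolding r_def using path_reverse[OF p] by (rule someI_ex)
  then show "path X E z (return_loop z) z" "length (return_loop z) \<le> length v + K * length v"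
    unfolding return_loop_def r_def[symmetric] using path_append[OF p] by auto
qed

definition insert_loop :: "'v \<Rightarrow> nat \<Rightarrow> 'a list \<Rightarrow> 'a list" where
  "insert_loop z t u = take (t * length v) u @ return_loop (target z (take (t * length v) u))
     @ drop (t * length v) u"

fun insert_loops :: "nat \<Rightarrow> 'v \<Rightarrow> 'a list \<Rightarrow> nat list \<Rightarrow> 'a list" where
  "insert_loops g z u [] = u"
| "insert_loops g z u (t # ts) = insert_loop z t (take (g * length v) u)
     @ insert_loops g (target z (take (g * length v) u)) (drop (g * length v) u) ts"

lemma path_split_at:
  assumes "path X E z u y"
  obtains z' where "path X E z (take n u) z'" "path X E z' (drop n u) y" "target z (take n u) = z'"
  using assms path_append_iff[of z "take n u" "drop n u"] target_eq by auto

lemma insert_loop_path_length: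
  assumes "path X E z u y"
  shows "path X E z (insert_loop z t u) y"
    and "length (insert_loop z t u) \<le> length u + (length v + K * length v)"
proof -
  obtain z' where z': "path X E z (take (t * length v) u) z'"
    "path X E z' (drop (t * length v) u) y" "target z (take (t * length v) u) = z'"
    using path_split_at[OF assms] .
  have "z' \<in> X" using z'(1) path_in_graph by blast
  then show "path X E z (insert_loop z t u) y"
    "length (insert_loop z t u) \<le> length u + (length v + K * length v)"
    unfolding insert_loop_def z'(3) using return_loop_path_length[of z'] z'(1,2)
    by (auto intro!: path_append)
qed

lemma length_insert_loop_ge: "length u + length v \<le> length (insert_loop z t u)"
proof -
  have "length (insert_loop z t u)
      = length u + length (return_loop (target z (take (t * length v) u)))"
    unfolding insert_loop_def by (auto simp: min_def)
  then show ?thesis using length_return_loop_ge by (metis add_left_mono)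
qed

lemma length_insert_loops_ge: "length u + length ts * length v \<le> length (insert_loops g z u ts)"
proof (induction ts arbitrary: z u)
  case (Cons t ts)
  let ?b = "take (g * length v) u" and ?r = "drop (g * length v) u"
  have "length u + length (t # ts) * length v
      = (length ?b + length v) + (length ?r + length ts * length v)" by simp
  also have "\<dots> \<le> length (insert_loops g z u (t # ts))"
    using length_insert_loop_ge[of ?b z t] Cons.IH[of ?r "target z ?b"] by simp
  finally show ?case .
qed simp

lemma insert_loops_path_length:
  assumes "path X E z u y"
  shows "path X E z (insert_loops g z u ts) y \<and>
    length (insert_loops g z u ts) \<le> length u + length ts * (length v + K * length v)"
  using assms
proof (induction ts arbitrary: z u)
  case (Cons t ts)
  obtain z' where z': "path X E z (take (g * length v) u) z'"
    "path X E z' (drop (g * length v) u) y" "target z (take (g * length v) u) = z'"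
    using path_split_at[OF Cons.prems] .
  show ?case
    unfolding insert_loops.simps z'(3) using Cons.IH[OF z'(2)] insert_loop_path_length[OF z'(1), of t]
    by (auto intro: path_append)
qed simp

lemma insert_loop_append_inj:
  assumes eq: "insert_loop z t u @ r = insert_loop z t' u' @ r'"
    and len: "length u = length u'" "t * length v \<le> length u" "t' * length v \<le> length u'"
    and free: "\<not> factor v u" "\<not> factor v u'"
  shows "t = t' \<and> u = u' \<and> r = r'"
proof -
  let ?s = "take (t * length v) u" and ?s' = "take (t' * length v) u'"
  obtain w w' where "?s @ v @ w = ?s' @ v @ w'"
    using eq unfolding insert_loop_def return_loop_def append_assoc by (rule that)
  moreover have "\<not> factor v ?s" "\<not> factor v ?s'" using free factor_take by blast+
  moreover have "length ?s = t * length v" "length ?s' = t' * length v" using len by auto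
  then have "length ?s mod length v = length ?s' mod length v" by simp
  ultimately have "?s = ?s'" using factor_free_prefix_eq v_nonempty by blast
  with \<open>length ?s = t * length v\<close> \<open>length ?s' = t' * length v\<close> have "t = t'"
    using v_nonempty by simp
  with eq \<open>?s = ?s'\<close> have "drop (t * length v) u @ r = drop (t * length v) u' @ r'"
    unfolding insert_loop_def by simp
  then have "drop (t * length v) u = drop (t * length v) u'" "r = r'"
    using len(1) by (simp_all add: append_eq_append_conv)
  with \<open>?s = ?s'\<close> \<open>t = t'\<close> show ?thesis by (metis append_take_drop_id)
qed

lemma insert_loops_inj:
  assumes "insert_loops g z u ts = insert_loops g z u' ts'"
    and "length u = length u'" "length ts = length ts'" "set ts \<subseteq> {..<g}" "set ts' \<subseteq> {..<g}"
    and "length ts * (g * length v) \<le> length u" "\<not> factor v u" "\<not> factor v u'"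
  shows "u = u' \<and> ts = ts'"
  using assms
proof (induction ts arbitrary: ts' z u u')
  case (Cons t ts)
  then obtain t' ts'' where ts': "ts' = t' # ts''" by (cases ts') auto
  let ?b = "take (g * length v) u" and ?b' = "take (g * length v) u'"
  let ?r = "drop (g * length v) u" and ?r' = "drop (g * length v) u'"
  have "insert_loop z t ?b @ insert_loops g (target z ?b) ?r ts
      = insert_loop z t' ?b' @ insert_loops g (target z ?b') ?r' ts''"
    using Cons.prems(1) unfolding ts' by simp
  moreover have "length ?b = length ?b'" using Cons.prems(2) by simp
  moreover have "t < g" "t' < g" using Cons.prems(4,5) ts' by auto
  then have "t * length v \<le> length ?b" "t' * length v \<le> length ?b'"
    using Cons.prems(2,6) by auto
  moreover have "\<not> factor v ?b" "\<not> factor v ?b'" using Cons.prems(7,8) factor_take by blast+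
  ultimately have "t = t' \<and> ?b = ?b' \<and>
      insert_loops g (target z ?b) ?r ts = insert_loops g (target z ?b') ?r' ts''"
    by (rule insert_loop_append_inj)
  then have "t = t'" "?b = ?b'"
    and rest: "insert_loops g (target z ?b) ?r ts = insert_loops g (target z ?b) ?r' ts''"
    by metis+
  have "?r = ?r' \<and> ts = ts''"
  proof (rule Cons.IH[OF rest])
    show "\<not> factor v ?r" "\<not> factor v ?r'" using Cons.prems(7,8) factor_drop by blast+
    show "length ?r = length ?r'" "length ts = length ts''" using Cons.prems(2,3) ts' by auto
    show "set ts \<subseteq> {..<g}" "set ts'' \<subseteq> {..<g}" using Cons.prems(4,5) ts' by auto
    show "length ts * (g * length v) \<le> length ?r" using Cons.prems(6) by simp
  qed
  with \<open>t = t'\<close> \<open>?b = ?b'\<close> ts' show ?case by (metis append_take_drop_id)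
qed simp

lemma nwords_avoiding_mult_le:
  fixes g n :: nat
  assumes "v \<in> F"
  defines "Q \<equiv> n div (g * length v)"
  shows "nwords (avoiding (lang X E x y) F) n * g ^ Q
    \<le> (\<Sum>l\<in>{n + Q * length v .. n + Q * (length v + K * length v)}. nwords (lang X E x y) l)"
proof -
  let ?L = "lang X E x y" and ?I = "{n + Q * length v .. n + Q * (length v + K * length v)}"
  define A where "A = {u \<in> avoiding ?L F. length u = n}"
  define B where "B = {ts. set ts \<subseteq> {..<g} \<and> length ts = Q}"
  define T where "T = (\<Union>l\<in>?I. {w \<in> ?L. length w = l})"
  have "Q * (g * length v) \<le> n" unfolding Q_def by (rule div_times_less_eq_dividend)
  then have "inj_on (\<lambda>(u, ts). insert_loops g x u ts) (A \<times> B)"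
    using assms(1) by (intro inj_onI, clarify, intro insert_loops_inj)
      (auto simp: A_def B_def avoiding_def)
  moreover have "(\<lambda>(u, ts). insert_loops g x u ts) ` (A \<times> B) \<subseteq> T"
  proof clarify
    fix u ts assume "u \<in> A" "ts \<in> B"
    then have "path X E x u y" "length u = n" "length ts = Q"
      by (auto simp: A_def B_def avoiding_def lang_def)
    then show "insert_loops g x u ts \<in> T"
      using insert_loops_path_length[of x u y g ts] length_insert_loops_ge[of u ts g x]
      unfolding T_def lang_def by auto
  qed
  moreover have "finite T" unfolding T_def using finite_lang_level by auto
  ultimately have "card A * card B \<le> card T" by (metis card_inj_on_le card_cartesian_product)
  also have "card T \<le> (\<Sum>l\<in>?I. card {w \<in> ?L. length w = l})"
    unfolding T_def by (rule card_UN_le) simp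
  finally show ?thesis
    using card_lists_length_eq[of "{..<g}" Q] unfolding A_def B_def nwords_def by simp
qed

lemma frequently_nwords_lang_pos:
  assumes "w \<in> lang X E x y"
  shows "frequently (\<lambda>n. 0 < nwords (lang X E x y) n) sequentially"
  unfolding frequently_sequentially
proof
  fix N
  have w: "path X E x w y" and "y \<in> X" using assms path_in_graph unfolding lang_def by auto
  define w' where "w' = w @ concat (replicate N (return_loop y))"
  have "1 \<le> length (return_loop y)"
    using length_return_loop_ge[of y] v_nonempty by (metis One_nat_def Suc_leI le_trans length_greater_0_conv)
  then have "N \<le> N * length (return_loop y)" by simp
  moreover have "length w' = length w + N * length (return_loop y)"
    unfolding w'_def by (simp add: length_concat sum_list_replicate)
  ultimately have "N \<le> length w'" by linarith
  moreover have "w' \<in> lang X E x y"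
    unfolding w'_def lang_def
    using path_append[OF w path_replicate[OF return_loop_path_length(1)[OF \<open>y \<in> X\<close>] \<open>y \<in> X\<close>]] by simp
  ultimately show "\<exists>n\<ge>N. 0 < nwords (lang X E x y) n"
    using finite_lang_level[of x y "length w'"] unfolding nwords_def by (auto simp: card_gt_0_iff)
qed

end

theorem mainTheorem14:
  fixes X :: "'v set" and E :: "('v \<times> 'a \<times> 'v) set" and \<Sigma> :: "'a set"
  assumes "labelled_graph X E \<Sigma>"
    and "uniformly_connected X E"
    and "fully_deterministic X E \<Sigma>"
    and "x \<in> X" and "y \<in> X"
  shows "growth_sensitive (lang X E x y)"
  unfolding growth_sensitive_def
proof (intro allI impI)
  fix F :: "'a list set"
  assume "finite F \<and> F \<noteq> {} \<and> (\<forall>v\<in>F. \<exists>w\<in>lang X E x y. factor v w)"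
  then obtain v w where "v \<in> F" "w \<in> lang X E x y" "factor v w" by blast
  interpret det_graph X E \<Sigma> using assms(1,3) by unfold_locales
  obtain K where "\<And>x a y. (x, a, y) \<in> E \<Longrightarrow> \<exists>w. path X E y w x \<and> length w \<le> K"
    using assms(2) unfolding uniformly_connected_def by blast
  moreover have "v \<noteq> []" "set v \<subseteq> \<Sigma>"
    using \<open>factor v w\<close> lang_alphabet[OF \<open>w \<in> lang X E x y\<close>] unfolding factor_def by auto
  ultimately interpret loop_insertion X E \<Sigma> K v by unfold_locales
  show "growth (avoiding (lang X E x y) F) < growth (lang X E x y)"
    unfolding growth_eq_growth_rate
  proof (rule growth_rate_less_of_insertion_bound[where m = "length v" and C = "length v + K * length v"])
    show "growth_rate (nwords (lang X E x y)) \<noteq> \<infinity>"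
      using growth_lang_le_ln[of x y] unfolding growth_eq_growth_rate by auto
    show "frequently (\<lambda>n. 0 < nwords (lang X E x y) n) sequentially"
      using frequently_nwords_lang_pos[OF \<open>w \<in> lang X E x y\<close>] .
  qed (use v_nonempty nwords_avoiding_mult_le[OF \<open>v \<in> F\<close>] in auto)
qed

end
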